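(* In the setting below, for all $j\in\mathcal{S}$ the matrix $B_j=\gamma_jp_j\,M^{1/2}_{:,j}(M^{1/2}_{:,j})^\top$ satisfies $\|B_j\|_2\le1$.
   Context: Setting: $f:\mathbb{R}^p\to\mathbb{R}$ convex, differentiable with Lipschitz gradient; $g_j:\mathbb{R}\to\mathbb{R}\cup\{+\infty\}$ proper closed convex; $x^\star$ a minimizer of $f(x)+\sum_jg_j(x_j)$; $\mathcal{S}=\{j:\partial g_j(x^\star_j)\text{ is a singleton}\}$; $g_j$ is $\mathcal{C}^2$ near $x^\star_j$ for $j\in\mathcal{S}$, $f$ is $\mathcal{C}^2$ near $x^\star$, and $\nabla^2_{\mathcal{S},\mathcal{S}}f(x^\star)\succ0$. Step sizes $0<\gamma_j\le1/L_j$, $L_j$ the coordinatewise Lipschitz constant of $\nabla_jf$. For $j\in\mathcal{S}$, $z^\star_j=x^\star_j-\gamma_j\nabla_jf(x^\star)$, $p_j>0$ is the derivative of $\operatorname{prox}_{\gamma_jg_j}$ at $z^\star_j$, $u_j=\frac1{\gamma_jp_j}-\frac1{\gamma_j}$, $M=\nabla^2_{\mathcal{S},\mathcal{S}}f(x^\star)+\operatorname{diag}(u)$ (symmetric positive definite), $M^{1/2}$ its symmetric square root and $M^{1/2}_{:,j}$ its column indexed by $j$. $\|\cdot\|_2$ is the spectral norm. *)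

theory Defs
  imports "HOL-Analysis.Analysis"
begin

definition proper_fun :: "(real \<Rightarrow> ereal) \<Rightarrow> bool" where
  "proper_fun g \<longleftrightarrow> (\<forall>x. g x \<noteq> -\<infinity>) \<and> (\<exists>x. g x \<noteq> \<infinity>)"

definition closed_fun :: "(real \<Rightarrow> ereal) \<Rightarrow> bool" where
  "closed_fun g \<longleftrightarrow> closed {(x, t::real). g x \<le> ereal t}"

definition convex_fun :: "(real \<Rightarrow> ereal) \<Rightarrow> bool" where
  "convex_fun g \<longleftrightarrow> (\<forall>x y t. 0 \<le> t \<and> t \<le> 1 \<longrightarrow>
      g ((1 - t) * x + t * y) \<le> ereal (1 - t) * g x + ereal t * g y)"

definition subdiff :: "(real \<Rightarrow> ereal) \<Rightarrow> real \<Rightarrow> real set" where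
  "subdiff g x = {s. \<forall>y. g y \<ge> g x + ereal (s * (y - x))}"

definition prox :: "real \<Rightarrow> (real \<Rightarrow> ereal) \<Rightarrow> real \<Rightarrow> real" where
  "prox gam g z = (THE x. \<forall>y. g x + ereal ((x - z)\<^sup>2 / (2 * gam))
                                \<le> g y + ereal ((y - z)\<^sup>2 / (2 * gam)))"

definition C2_near :: "(real \<Rightarrow> ereal) \<Rightarrow> real \<Rightarrow> bool" where
  "C2_near g a \<longleftrightarrow> (\<exists>e>0. \<exists>\<phi> \<phi>' \<phi>''.
      (\<forall>y\<in>ball a e. g y = ereal (\<phi> y) \<and> (\<phi> has_real_derivative \<phi>' y) (at y)
                    \<and> (\<phi>' has_real_derivative \<phi>'' y) (at y))
      \<and> continuous_on (ball a e) \<phi>'')"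

definition symmetric_mat :: "real^'n^'n \<Rightarrow> bool" where
  "symmetric_mat A \<longleftrightarrow> transpose A = A"

definition psd_mat :: "real^'n^'n \<Rightarrow> bool" where
  "psd_mat A \<longleftrightarrow> (\<forall>v. 0 \<le> v \<bullet> (A *v v))"

end

theory Submission
  imports Defs
begin

text \<open>\<open>B\<^sub>j\<close> is the rank-one matrix \<open>c r r\<^sup>T\<close> with \<open>c = \<gamma>\<^sub>j p\<^sub>j\<close> and \<open>r = M\<^sup>1\<^sup>/\<^sup>2\<^sub>:\<^sub>,\<^sub>j\<close>, so its norm
  is \<open>c \<parallel>r\<parallel>\<^sup>2 = c M\<^sub>j\<^sub>j = \<gamma>\<^sub>j p\<^sub>j \<nabla>\<^sup>2\<^sub>j\<^sub>j f(x\<^sup>\<star>) + 1 - p\<^sub>j\<close>. The diagonal Hessian entry is a derivative of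
  the coordinate \<open>\<nabla>\<^sub>jf\<close> along \<open>e\<^sub>j\<close> and hence at most \<open>L\<^sub>j \<le> 1/\<gamma>\<^sub>j\<close>, which bounds the
  norm by \<open>p\<^sub>j + 1 - p\<^sub>j = 1\<close>.\<close>

lemma has_real_derivative_le_Lipschitz:
  fixes \<phi> :: "real \<Rightarrow> real"
  assumes deriv: "(\<phi> has_real_derivative D) (at x)"
    and Lipschitz: "\<And>h. \<bar>\<phi> (x + h) - \<phi> x\<bar> \<le> K * \<bar>h\<bar>"
  shows "D \<le> K"
proof -
  have "((\<lambda>h. (\<phi> (x + h) - \<phi> x) / h) \<longlongrightarrow> D) (at 0)"
    using deriv by (simp add: DERIV_def)
  moreover have "\<forall>\<^sub>F h in at 0. (\<phi> (x + h) - \<phi> x) / h \<le> K"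
  proof (rule eventually_at_filter[THEN iffD2], rule always_eventually, intro allI impI)
    fix h :: real
    assume "h \<noteq> 0"
    have "(\<phi> (x + h) - \<phi> x) / h \<le> \<bar>\<phi> (x + h) - \<phi> x\<bar> / \<bar>h\<bar>"
      by (metis abs_divide abs_ge_self)
    also have "\<dots> \<le> K"
      using Lipschitz[of h] \<open>h \<noteq> 0\<close> by (simp add: divide_le_eq)
    finally show "(\<phi> (x + h) - \<phi> x) / h \<le> K" .
  qed
  ultimately show ?thesis
    by (rule tendsto_upperbound) simp
qed

lemma hessian_diag_le_coordinate_Lipschitz:
  fixes grad :: "real^'n \<Rightarrow> real^'n" and H :: "real^'n^'n"
  assumes deriv: "(grad has_derivative (\<lambda>h. H *v h)) (at x)"
    and Lipschitz: "\<And>y h. \<bar>grad (y + h *\<^sub>R axis i 1) $ i - grad y $ i\<bar> \<le> K * \<bar>h\<bar>"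
  shows "H $ i $ i \<le> K"
proof (rule has_real_derivative_le_Lipschitz)
  have "((\<lambda>t::real. x + t *\<^sub>R axis i 1) has_derivative (\<lambda>t. t *\<^sub>R axis i 1)) (at 0)"
    by (auto intro!: derivative_eq_intros)
  from has_derivative_compose[OF this] deriv
  have "((\<lambda>t. grad (x + t *\<^sub>R axis i 1)) has_derivative (\<lambda>t. H *v (t *\<^sub>R axis i 1))) (at 0)"
    by simp
  from bounded_linear.has_derivative[OF bounded_linear_vec_nth this]
  have "((\<lambda>t. grad (x + t *\<^sub>R axis i 1) $ i) has_derivative
      (\<lambda>t. (H *v (t *\<^sub>R axis i 1)) $ i)) (at 0)" .
  moreover have "(\<lambda>t. (H *v (t *\<^sub>R axis i 1)) $ i) = (\<lambda>t. H $ i $ i * t)"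
    by (rule ext) (simp add: matrix_vector_mult_def axis_def if_distrib cong: if_cong)
  ultimately show "((\<lambda>t. grad (x + t *\<^sub>R axis i 1) $ i) has_real_derivative H $ i $ i) (at 0)"
    by (simp add: has_field_derivative_def)
  show "\<And>h. \<bar>grad (x + (0 + h) *\<^sub>R axis i 1) $ i - grad (x + 0 *\<^sub>R axis i 1) $ i\<bar> \<le> K * \<bar>h\<bar>"
    using Lipschitz by simp
qed

lemma inner_column_self_eq_square_diag:
  fixes R :: "real^'n^'n"
  assumes "symmetric_mat R"
  shows "column j R \<bullet> column j R = (R ** R) $ j $ j"
proof -
  have "R $ a $ b = R $ b $ a" for a b
    using assms unfolding symmetric_mat_def by (metis transpose_def vec_lambda_beta)
  then show ?thesis
    by (simp add: column_def inner_vec_def matrix_matrix_mult_def)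
qed

lemma onorm_rank_one_le:
  fixes r :: "real^'n"
  shows "onorm (\<lambda>v. (\<chi> a b. c * r $ a * r $ b) *v v) \<le> \<bar>c\<bar> * (r \<bullet> r)"
proof (rule onorm_le)
  fix v :: "real^'n"
  have "(\<chi> a b. c * r $ a * r $ b) *v v = (c * (r \<bullet> v)) *\<^sub>R r"
    by (simp add: vec_eq_iff matrix_vector_mult_def inner_vec_def sum_distrib_left algebra_simps)
  then have "norm ((\<chi> a b. c * r $ a * r $ b) *v v) = \<bar>c\<bar> * \<bar>r \<bullet> v\<bar> * norm r"
    by (simp add: abs_mult)
  also have "\<dots> \<le> \<bar>c\<bar> * (norm r * norm v) * norm r"
    by (intro mult_right_mono mult_left_mono Cauchy_Schwarz_ineq2) auto
  also have "\<dots> = \<bar>c\<bar> * (r \<bullet> r) * norm v"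
    by (simp add: power2_norm_eq_inner[symmetric] power2_eq_square)
  finally show "norm ((\<chi> a b. c * r $ a * r $ b) *v v) \<le> \<bar>c\<bar> * (r \<bullet> r) * norm v" .
qed

theorem lemma5:
  fixes f :: "real^'n \<Rightarrow> real"
    and grad :: "real^'n \<Rightarrow> real^'n"
    and Hess :: "real^'n \<Rightarrow> real^'n^'n"
    and g :: "'n \<Rightarrow> real \<Rightarrow> ereal"
    and xstar :: "real^'n"
    and gam L p u :: "'n \<Rightarrow> real"
    and S :: "'n set"
    and M R :: "real^'n^'n"
    and j :: 'n
  assumes f_convex: "convex_on UNIV f"
    and f_grad: "\<forall>x. (f has_derivative (\<lambda>h. grad x \<bullet> h)) (at x)"
    and grad_lipschitz: "\<exists>K. \<forall>x y. norm (grad x - grad y) \<le> K * norm (x - y)"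
    and g_pcc: "\<forall>i. proper_fun (g i) \<and> closed_fun (g i) \<and> convex_fun (g i)"
    and xstar_min: "\<forall>x. ereal (f xstar) + (\<Sum>i\<in>UNIV. g i (xstar $ i))
                        \<le> ereal (f x) + (\<Sum>i\<in>UNIV. g i (x $ i))"
    and S_def: "S = {i. \<exists>s. subdiff (g i) (xstar $ i) = {s}}"
    and g_C2: "\<forall>i\<in>S. C2_near (g i) (xstar $ i)"
    and f_C2: "\<exists>e>0. (\<forall>y\<in>ball xstar e. (grad has_derivative (\<lambda>h. Hess y *v h)) (at y))
                     \<and> continuous_on (ball xstar e) Hess"
    and hess_SS_pd: "\<forall>v. v \<noteq> 0 \<and> (\<forall>i. i \<notin> S \<longrightarrow> v $ i = 0) \<longrightarrow> 0 < v \<bullet> (Hess xstar *v v)"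
    and L_coord: "\<forall>i x h. \<bar>grad (x + h *\<^sub>R axis i 1) $ i - grad x $ i\<bar> \<le> L i * \<bar>h\<bar>"
    and steps: "\<forall>i. 0 < gam i \<and> gam i \<le> 1 / L i"
    and p_deriv: "\<forall>i\<in>S. (prox (gam i) (g i) has_real_derivative p i)
                           (at (xstar $ i - gam i * grad xstar $ i)) \<and> 0 < p i"
    and u_def: "u = (\<lambda>i. 1 / (gam i * p i) - 1 / gam i)"
    and M_def: "M = (\<chi> a b. if a \<in> S \<and> b \<in> S
                      then Hess xstar $ a $ b + (if a = b then u a else 0) else 0)"
    and R_sqrt: "symmetric_mat R \<and> psd_mat R \<and> R ** R = M"
    and j_in: "j \<in> S"
  shows "onorm (\<lambda>v. (\<chi> a b. gam j * p j * (R $ a $ j) * (R $ b $ j)) *v v) \<le> 1"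
proof -
  define H where "H = Hess xstar $ j $ j"
  have gam_pos: "0 < gam j" and p_pos: "0 < p j"
    using steps p_deriv j_in by auto
  then have "0 < L j"
    using steps by (metis divide_le_0_1_iff not_le order_le_less_trans)
  then have "gam j * L j \<le> 1"
    using steps by (simp add: le_divide_eq)
  moreover have "H \<le> L j"
    unfolding H_def using f_C2 L_coord
    by (intro hessian_diag_le_coordinate_Lipschitz[of grad _ xstar]) auto
  ultimately have "gam j * H \<le> 1"
    using mult_left_mono[of H "L j" "gam j"] gam_pos by linarith
  have "column j R \<bullet> column j R = H + u j"
    using inner_column_self_eq_square_diag[of R j] R_sqrt j_in by (simp add: M_def H_def)
  then have "gam j * p j * (column j R \<bullet> column j R) = p j * (gam j * H) + 1 - p j"
    using gam_pos p_pos by (simp add: u_def field_simps)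
  also have "\<dots> \<le> 1"
    using mult_left_mono[OF \<open>gam j * H \<le> 1\<close>, of "p j"] p_pos by simp
  finally show ?thesis
    using onorm_rank_one_le[of "gam j * p j" "column j R"] gam_pos p_pos
    by (simp add: column_def)
qed

end
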